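(* For any choice of the almost disjoint family $\mathcal{A}$ and of the enumeration of $X$ in its definition, $\rho^{[0,1]}$ is a partition regular function and $\mathcal{I}_{\rho^{[0,1]}}=\mathrm{conv}$.
   Context: $\mathrm{conv}$ is the ideal on $\mathbb{Q}\cap[0,1]$ of all sets covered by the ranges of finitely many sequences in $\mathbb{Q}\cap[0,1]$ convergent in $[0,1]$. Definition of $\rho^{[0,1]}$: let $\mathcal{A}=\{A_\alpha:\alpha<\mathfrak{c}\}$ be an almost disjoint family on $\omega$ (pairwise distinct infinite subsets of $\omega$ with pairwise finite intersections). Let $X$ be the set of all $x\colon\omega\times\omega\to[0,1]\cap\mathbb{Q}$ such that: (i) for every $p\in[0,1]$ there is an open neighborhood $U$ of $p$ with $x[(\omega\setminus[0,n])\times\omega]\not\subseteq U$ for all $n\in\omega$; (ii) $x$ is injective; (iii) $x[(\omega\setminus[0,n])\times\omega]\notin\mathrm{conv}$ for all $n$. Fix an enumeration $X=\{x_\alpha:\alpha<\mathfrak{c}\}$. Let $\overline{\mathcal{A}}=\{A\setminus K:A\in\mathcal{A},K\in[\omega]^{<\omega}\}$ and $\rho^{[0,1]}\colon\overline{\mathcal{A}}\to[[0,1]\cap\mathbb{Q}]^\omega$, $\rho^{[0,1]}(A_\alpha\setminus K)=x_\alpha[(\omega\setminus[0,\max(A_\alpha\cap K)])\times\omega]$, with the convention $\max\emptyset=0$. Here $[0,m]$ denotes $\{0,1,\dots,m\}$. Partition regular function: $\Lambda,\Omega$ countably infinite, $\mathcal{F}$ a nonempty family of infinite subsets of $\Omega$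 with $F\setminus K\in\mathcal{F}$ for $F\in\mathcal{F}$, $K$ finite; $\rho\colon\mathcal{F}\to[\Lambda]^\omega$ is partition regular if (M) $E\subseteq F\Rightarrow\rho(E)\subseteq\rho(F)$; (R) if $F\in\mathcal{F}$ and $\rho(F)=A\cup B$ then some $E\in\mathcal{F}$ has $\rho(E)\subseteq A$ or $\rho(E)\subseteq B$; (S) for every $E\in\mathcal{F}$ there is $F\in\mathcal{F}$, $F\subseteq E$, such that every $a\in\rho(F)$ satisfies $a\notin\rho(F\setminus K)$ for some finite $K\subseteq\Omega$. $\mathcal{I}_\rho=\{A\subseteq\Lambda:\forall F\in\mathcal{F}\ \rho(F)\not\subseteq A\}$. *)

theory Defs
  imports "HOL-Analysis.Analysis"
begin

definition QI :: "real set" where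
  "QI = {q. q \<in> \<rat> \<and> 0 \<le> q \<and> q \<le> 1}"

definition conv :: "real set set" where
  "conv = {B. B \<subseteq> QI \<and> (\<exists>S. finite S \<and>
      (\<forall>s\<in>S. range s \<subseteq> QI \<and> (\<exists>L\<in>{0..1}. s \<longlonglongrightarrow> L)) \<and>
      B \<subseteq> (\<Union>s\<in>S. range s))}"

definition partition_regular ::
  "'a set \<Rightarrow> 'b set \<Rightarrow> 'b set set \<Rightarrow> ('b set \<Rightarrow> 'a set) \<Rightarrow> bool" where
  "partition_regular Lam Om Fam rho \<longleftrightarrow>
     countable Lam \<and> infinite Lam \<and> countable Om \<and> infinite Om \<and>
     Fam \<noteq> {} \<and>
     (\<forall>F\<in>Fam. F \<subseteq> Om \<and> infinite F) \<and>
     (\<forall>F\<in>Fam. \<forall>K. finite K \<longrightarrow> F - K \<in> Fam) \<and>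
     (\<forall>F\<in>Fam. rho F \<subseteq> Lam \<and> infinite (rho F)) \<and>
     (\<forall>E\<in>Fam. \<forall>F\<in>Fam. E \<subseteq> F \<longrightarrow> rho E \<subseteq> rho F) \<and>
     (\<forall>F\<in>Fam. \<forall>A B. rho F = A \<union> B \<longrightarrow> (\<exists>E\<in>Fam. rho E \<subseteq> A \<or> rho E \<subseteq> B)) \<and>
     (\<forall>E\<in>Fam. \<exists>F\<in>Fam. F \<subseteq> E \<and>
        (\<forall>a\<in>rho F. \<exists>K. finite K \<and> K \<subseteq> Om \<and> a \<notin> rho (F - K)))"

definition ideal_of :: "'a set \<Rightarrow> 'b set set \<Rightarrow> ('b set \<Rightarrow> 'a set) \<Rightarrow> 'a set set" where
  "ideal_of Lam Fam rho = {A. A \<subseteq> Lam \<and> (\<forall>F\<in>Fam. \<not> rho F \<subseteq> A)}"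

definition almost_disjoint_family :: "('i \<Rightarrow> nat set) \<Rightarrow> bool" where
  "almost_disjoint_family A \<longleftrightarrow> inj A \<and> (\<forall>i. infinite (A i)) \<and>
     (\<forall>i j. i \<noteq> j \<longrightarrow> finite (A i \<inter> A j))"

definition tail :: "nat \<Rightarrow> (nat \<times> nat) set" where
  "tail n = {m. n < m} \<times> UNIV"

definition Xset :: "(nat \<times> nat \<Rightarrow> real) set" where
  "Xset = {x. range x \<subseteq> QI \<and>
     (\<forall>p\<in>{0..1}. \<exists>U. open U \<and> p \<in> U \<and> (\<forall>n. \<not> x ` tail n \<subseteq> U)) \<and>
     inj x \<and>
     (\<forall>n. x ` tail n \<notin> conv)}"

definition Abar :: "('i \<Rightarrow> nat set) \<Rightarrow> nat set set" where
  "Abar A = {A i - K | i K. finite K}"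

definition max0 :: "nat set \<Rightarrow> nat" where
  "max0 K = (if K = {} then 0 else Max K)"

text \<open>rho(A_i - K) = x_i[\<omega>\<setminus>[0, max(A_i \<inter> K)] \<times> \<omega>]; well defined for an
  almost disjoint family (the value does not depend on the chosen representation).\<close>
definition rho01 :: "('i \<Rightarrow> nat set) \<Rightarrow> ('i \<Rightarrow> nat \<times> nat \<Rightarrow> real) \<Rightarrow> nat set \<Rightarrow> real set" where
  "rho01 A x E = (let (i, K) = (SOME (i, K). finite K \<and> E = A i - K)
                  in x i ` tail (max0 (A i \<inter> K)))"

end

theory Submission
  imports Defs
begin

text \<open>A set \<open>S \<subseteq> \<rat> \<inter> [0,1]\<close> belongs to \<open>conv\<close> iff it has only finitely many
  accumulation points: for the nontrivial direction split \<open>S\<close> by nearest accumulation point,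
  and Bolzano-Weierstrass makes each part converge to its point. Hence a set \<open>S \<notin> conv\<close> has
  infinitely many accumulation points \<open>c k\<close>, approached by sequences \<open>d k\<close> in \<open>S\<close> with pairwise
  disjoint ranges. Spreading every \<open>d k\<close> over every row of \<open>\<omega> \<times> \<omega>\<close> gives an element of \<open>X\<close>
  with range in \<open>S\<close>, because each of its tails accumulates at every \<open>c k\<close>. So every set outside
  \<open>conv\<close> contains a value of \<open>\<rho>\<close>, which yields (R) and that the ideal of \<open>\<rho>\<close> is \<open>conv\<close>;
  (M) and (S) are read off the explicit form
  \<open>\<rho>(A\<^sub>\<alpha> - K) = x\<^sub>\<alpha>[(\<omega> - [0, max (A\<^sub>\<alpha> \<inter> K)]) \<times> \<omega>]\<close>.\<close>

section \<open>Limit points and convergent sequences\<close>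

lemma islimpt_if_infinite_subset_range:
  assumes "f \<longlonglongrightarrow> c" "T \<subseteq> range f" "infinite T"
  shows "c islimpt T"
proof (rule islimptI)
  fix U assume "c \<in> U" "open U"
  then obtain N where N: "\<forall>n\<ge>N. f n \<in> U"
    using assms(1) lim_explicit by blast
  have "T - U \<subseteq> f ` {..<N}"
  proof
    fix z assume "z \<in> T - U"
    then obtain n where "z = f n" "f n \<notin> U"
      using assms(2) by auto
    moreover have "n < N"
      using N \<open>f n \<notin> U\<close> not_le by blast
    ultimately show "z \<in> f ` {..<N}"
      by blast
  qed
  moreover have "infinite (T - {c})"
    using assms(3) by simp
  ultimately have "(T - {c}) \<inter> U \<noteq> {}"
    using finite_subset[of "T - {c}" "f ` {..<N}"] by blast
  then show "\<exists>y\<in>T. y \<in> U \<and> y \<noteq> c"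
    by blast
qed

lemma finite_far_from_limit:
  fixes f :: "nat \<Rightarrow> 'a::metric_space"
  assumes "f \<longlonglongrightarrow> c" "r > 0"
  shows "finite {z\<in>range f. r \<le> dist z c}"
proof -
  obtain N where N: "\<forall>n\<ge>N. dist (f n) c < r"
    using assms unfolding lim_sequentially by blast
  have "{z\<in>range f. r \<le> dist z c} \<subseteq> f ` {..<N}"
  proof
    fix z assume "z \<in> {z\<in>range f. r \<le> dist z c}"
    then obtain n where n: "z = f n" "r \<le> dist (f n) c"
      by auto
    then have "n < N"
      using N by (meson not_le)
    then show "z \<in> f ` {..<N}"
      using n(1) by simp
  qed
  then show ?thesis
    by (rule finite_subset) simp
qed

lemma tendsto_if_inj_into_concentrated:
  fixes e :: "nat \<Rightarrow> 'a::metric_space"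
  assumes "inj e" "range e \<subseteq> T" "\<And>r. r > 0 \<Longrightarrow> finite {z\<in>T. r \<le> dist z c}"
  shows "e \<longlonglongrightarrow> c"
proof (rule tendstoI)
  fix r :: real assume "r > 0"
  then have "finite (e -` {z\<in>T. r \<le> dist z c})"
    using assms(1,3) by (intro finite_vimageI) auto
  moreover have "{n. \<not> dist (e n) c < r} \<subseteq> e -` {z\<in>T. r \<le> dist z c}"
    using assms(2) by auto
  ultimately have "finite {n. \<not> dist (e n) c < r}"
    by (rule finite_subset[rotated])
  then show "\<forall>\<^sub>F n in sequentially. dist (e n) c < r"
    by (simp add: eventually_cofinite[symmetric] cofinite_eq_sequentially)
qed

lemma limpts_dist_le_if_subset_ball:
  fixes a b :: "'a::metric_space"
  assumes "a islimpt T" "b islimpt T" "T \<subseteq> ball p r"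
  shows "dist a b \<le> 2 * r"
proof -
  have "T \<subseteq> cball p r"
    using assms(3) by auto
  then have "a islimpt cball p r" "b islimpt cball p r"
    using assms(1,2) islimpt_subset by blast+
  then have "a \<in> cball p r" "b \<in> cball p r"
    using closed_limpt closed_cball by blast+
  then show ?thesis
    using dist_triangle[of a b p] by (simp add: dist_commute)
qed

lemma finite_range_Int_if_tendsto_distinct:
  fixes f g :: "nat \<Rightarrow> 'a::metric_space"
  assumes "f \<longlonglongrightarrow> a" "g \<longlonglongrightarrow> b" "a \<noteq> b"
  shows "finite (range f \<inter> range g)"
proof -
  define r where "r = dist a b / 2"
  have "r > 0"
    using assms(3) by (simp add: r_def)
  have "range f \<inter> range g \<subseteq> {z\<in>range f. r \<le> dist z a} \<union> {z\<in>range g. r \<le> dist z b}"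
  proof
    fix z assume "z \<in> range f \<inter> range g"
    moreover have "r \<le> dist z a \<or> r \<le> dist z b"
      using dist_triangle[of a b z] dist_commute[of z a] unfolding r_def by linarith
    ultimately show "z \<in> {z\<in>range f. r \<le> dist z a} \<union> {z\<in>range g. r \<le> dist z b}"
      by blast
  qed
  then show ?thesis
    by (rule finite_subset) (simp add: assms(1,2) \<open>r > 0\<close> finite_far_from_limit)
qed

section \<open>The ideal \<open>conv\<close>\<close>

lemma countable_QI: "countable QI"
  by (rule countable_subset[OF _ countable_rat]) (auto simp: QI_def)

lemma infinite_QI: "infinite QI"
proof
  assume "finite QI"
  moreover have "range (\<lambda>n::nat. 1 / real (Suc n)) \<subseteq> QI"
    by (auto simp: QI_def field_simps intro: Rats_divide)
  ultimately have "finite (range (\<lambda>n::nat. 1 / real (Suc n)))"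
    by (rule finite_subset[rotated])
  moreover have "inj (\<lambda>n::nat. 1 / real (Suc n))"
    by (rule injI) simp
  ultimately show False
    using finite_imageD by blast
qed

lemma QI_subset_unit_interval: "QI \<subseteq> {0..1}"
  unfolding QI_def by auto

lemma limpt_in_unit_interval:
  assumes "c islimpt S" "S \<subseteq> QI"
  shows "c \<in> {0..1}"
proof -
  have "c islimpt {0..1::real}"
    using assms QI_subset_unit_interval by (blast intro: islimpt_subset)
  then show ?thesis
    using closed_limpt closed_atLeastAtMost by blast
qed

lemma conv_subset_QI: "B \<in> conv \<Longrightarrow> B \<subseteq> QI"
  unfolding conv_def by blast

lemma conv_subset: "B \<in> conv \<Longrightarrow> C \<subseteq> B \<Longrightarrow> C \<in> conv"
  unfolding conv_def mem_Collect_eq by (meson order_trans)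

lemma conv_empty: "{} \<in> conv"
  unfolding conv_def by (intro CollectI conjI exI[of _ "{}"]) auto

lemma conv_Un:
  assumes "B \<in> conv" "C \<in> conv"
  shows "B \<union> C \<in> conv"
proof -
  obtain S1 where S1: "finite S1" "\<forall>s\<in>S1. range s \<subseteq> QI \<and> (\<exists>L\<in>{0..1}. s \<longlonglongrightarrow> L)"
      "B \<subseteq> (\<Union>s\<in>S1. range s)"
    using assms(1) unfolding conv_def by blast
  obtain S2 where S2: "finite S2" "\<forall>s\<in>S2. range s \<subseteq> QI \<and> (\<exists>L\<in>{0..1}. s \<longlonglongrightarrow> L)"
      "C \<subseteq> (\<Union>s\<in>S2. range s)"
    using assms(2) unfolding conv_def by blast
  have "finite (S1 \<union> S2)"
    using S1(1) S2(1) by simp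
  moreover have "\<forall>s\<in>S1 \<union> S2. range s \<subseteq> QI \<and> (\<exists>L\<in>{0..1}. s \<longlonglongrightarrow> L)"
    unfolding ball_Un using S1(2) S2(2) by (rule conjI)
  moreover have "B \<union> C \<subseteq> (\<Union>s\<in>S1 \<union> S2. range s)"
    using S1(3) S2(3) by auto
  moreover have "B \<union> C \<subseteq> QI"
    using assms conv_subset_QI by blast
  ultimately show ?thesis
    unfolding conv_def mem_Collect_eq by (intro conjI exI[of _ "S1 \<union> S2"])
qed

lemma conv_UN: "finite P \<Longrightarrow> (\<And>p. p \<in> P \<Longrightarrow> B p \<in> conv) \<Longrightarrow> (\<Union>p\<in>P. B p) \<in> conv"
  by (induction P rule: finite_induct) (auto intro: conv_Un conv_empty)

lemma range_in_conv: "range s \<subseteq> QI \<Longrightarrow> s \<longlonglongrightarrow> L \<Longrightarrow> L \<in> {0..1} \<Longrightarrow> range s \<in> conv"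
  unfolding conv_def by (intro CollectI conjI exI[of _ "{s}"]) auto

lemma finite_in_conv:
  assumes "finite B" "B \<subseteq> QI"
  shows "B \<in> conv"
proof -
  have "range (\<lambda>_::nat. q) \<in> conv" if "q \<in> B" for q
    using that assms(2) by (intro range_in_conv) (auto simp: QI_def)
  then have "(\<Union>q\<in>B. range (\<lambda>_::nat. q)) \<in> conv"
    using assms(1) by (intro conv_UN)
  then show ?thesis
    by simp
qed

lemma finite_limpts_if_conv:
  assumes "B \<in> conv"
  shows "finite {c. c islimpt B}"
proof -
  obtain S where S: "finite S" "\<forall>s\<in>S. range s \<subseteq> QI \<and> (\<exists>L\<in>{0..1}. s \<longlonglongrightarrow> L)"
      "B \<subseteq> (\<Union>s\<in>S. range s)"
    using assms unfolding conv_def by blast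
  have "{c. c islimpt B} \<subseteq> lim ` S"
  proof
    fix c assume "c \<in> {c. c islimpt B}"
    then have "c islimpt (\<Union>s\<in>S. range s)"
      using S(3) by (auto intro: islimpt_subset)
    then obtain s where s: "s \<in> S" "c islimpt range s"
      using islimpt_finite_union_iff[OF S(1), of c "\<lambda>s. range s"] by blast
    moreover obtain L where "s \<longlonglongrightarrow> L"
      using S(2) s(1) by blast
    ultimately show "c \<in> lim ` S"
      using sequence_unique_limpt limI by (metis image_eqI)
  qed
  then show ?thesis
    by (rule finite_subset) (use S(1) in simp)
qed

lemma finite_outside_balls_around_limpts:
  fixes S :: "'a::metric_space set"
  assumes "compact K" "S \<subseteq> K" "e > 0"
  shows "finite (S - (\<Union>p\<in>{c. c islimpt S}. ball p e))"
proof (rule ccontr)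
  define T where "T = S - (\<Union>p\<in>{c. c islimpt S}. ball p e)"
  assume "infinite (S - (\<Union>p\<in>{c. c islimpt S}. ball p e))"
  then obtain q where q: "q islimpt T"
    using Heine_Borel_imp_Bolzano_Weierstrass[OF assms(1)] assms(2) unfolding T_def by blast
  then have "q islimpt S"
    unfolding T_def by (rule islimpt_subset) blast
  then have "T \<inter> ball q e = {}"
    unfolding T_def by blast
  moreover have "infinite (T \<inter> ball q e)"
    using q assms(3) islimpt_eq_infinite_ball by blast
  ultimately show False
    by simp
qed

lemma conv_if_concentrated:
  assumes "T \<subseteq> QI" "c \<in> {0..1}" "\<And>r. r > 0 \<Longrightarrow> finite {z\<in>T. r \<le> dist z c}"
  shows "T \<in> conv"
proof (cases "finite T")
  case True
  then show ?thesis
    using assms(1) by (rule finite_in_conv)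
next
  case False
  have "countable T"
    using assms(1) countable_QI countable_subset by blast
  then have bij: "bij_betw (from_nat_into T) UNIV T"
    using False by (rule bij_betw_from_nat_into)
  then have "from_nat_into T \<longlonglongrightarrow> c"
    using assms(3) by (intro tendsto_if_inj_into_concentrated[of _ T]) (auto simp: bij_betw_def)
  then have "range (from_nat_into T) \<in> conv"
    using bij assms(1,2) by (intro range_in_conv) (auto simp: bij_betw_def)
  then show ?thesis
    using bij by (simp add: bij_betw_def)
qed

lemma conv_if_finite_limpts:
  assumes S: "S \<subseteq> QI" and fin: "finite {c. c islimpt S}"
  shows "S \<in> conv"
proof -
  define P where "P = {c. c islimpt S}"
  define near where "near p = {s\<in>S. \<forall>q\<in>P. dist s p \<le> dist s q}" for p
  have far: "finite (S - (\<Union>p\<in>P. ball p e))" if "e > 0" for e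
    unfolding P_def using S QI_subset_unit_interval that
    by (intro finite_outside_balls_around_limpts[of "{0..1}"]) auto
  have cover: "S \<subseteq> (S - (\<Union>p\<in>P. ball p 1)) \<union> (\<Union>p\<in>P. near p)"
  proof
    fix s assume "s \<in> S"
    show "s \<in> (S - (\<Union>p\<in>P. ball p 1)) \<union> (\<Union>p\<in>P. near p)"
    proof (cases "P = {}")
      case False
      then obtain p where "is_arg_min (dist s) (\<lambda>p. p \<in> P) p"
        using ex_is_arg_min_if_finite[OF fin[folded P_def]] by blast
      then show ?thesis
        using \<open>s \<in> S\<close> unfolding near_def is_arg_min_linorder by blast
    qed (use \<open>s \<in> S\<close> in simp)
  qed
  have near_conv: "near p \<in> conv" if "p \<in> P" for p
  proof (rule conv_if_concentrated)
    show "near p \<subseteq> QI"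
      using S unfolding near_def by auto
    show "p \<in> {0..1}"
      using that S limpt_in_unit_interval unfolding P_def by blast
    fix r :: real assume "r > 0"
    have "{z\<in>near p. r \<le> dist z p} \<subseteq> S - (\<Union>q\<in>P. ball q r)"
      unfolding near_def by (force simp: dist_commute)
    then show "finite {z\<in>near p. r \<le> dist z p}"
      using far[OF \<open>r > 0\<close>] by (rule finite_subset)
  qed
  have "S - (\<Union>p\<in>P. ball p 1) \<in> conv"
    using far[of 1] S by (intro finite_in_conv) auto
  moreover have "(\<Union>p\<in>P. near p) \<in> conv"
    using fin near_conv unfolding P_def by (rule conv_UN)
  ultimately have "(S - (\<Union>p\<in>P. ball p 1)) \<union> (\<Union>p\<in>P. near p) \<in> conv"
    by (rule conv_Un)
  then show ?thesis
    using cover by (rule conv_subset)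
qed

lemma conv_iff_finite_limpts: "S \<subseteq> QI \<Longrightarrow> S \<in> conv \<longleftrightarrow> finite {c. c islimpt S}"
  using finite_limpts_if_conv conv_if_finite_limpts by blast

section \<open>Elements of \<open>X\<close> inside a set outside \<open>conv\<close>\<close>

lemma infinite_disjointed:
  assumes "infinite (G k)" "\<And>j. j < k \<Longrightarrow> finite (G k \<inter> G j)"
  shows "infinite (disjointed G k)"
proof -
  have "disjointed G k = G k - (\<Union>j<k. G k \<inter> G j)"
    by (auto simp: disjointed_def)
  moreover have "finite (\<Union>j<k. G k \<inter> G j)"
    using assms(2) by (intro finite_UN_I) auto
  ultimately show ?thesis
    using assms(1) by (simp add: Diff_infinite_finite)
qed

lemma inj_case_prod_if_disjoint_family:
  assumes "\<And>k. inj (d k)" "disjoint_family (\<lambda>k. range (d k))"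
  shows "inj (case_prod d)"
proof (rule injI, clarify)
  fix k n k' n' assume eq: "d k n = d k' n'"
  then have "range (d k) \<inter> range (d k') \<noteq> {}"
    by (metis IntI empty_iff rangeI)
  then have "k = k'"
    using assms(2) unfolding disjoint_family_on_def by blast
  moreover from this have "n = n'"
    using eq assms(1) by (simp add: inj_eq)
  ultimately show "k = k' \<and> n = n'"
    by simp
qed

lemma obtain_disjoint_sequences_to_limpts:
  fixes c :: "nat \<Rightarrow> 'a::metric_space"
  assumes "inj c" "\<And>k. c k islimpt S"
  obtains d :: "nat \<Rightarrow> nat \<Rightarrow> 'a"
  where "inj (case_prod d)" "range (case_prod d) \<subseteq> S" "\<And>k. d k \<longlonglongrightarrow> c k"
proof -
  have "\<forall>k. \<exists>g. (\<forall>n. g n \<in> S - {c k}) \<and> g \<longlonglongrightarrow> c k"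
    using assms(2) islimpt_sequential by blast
  then obtain f where "\<forall>k. (\<forall>n. f k n \<in> S - {c k}) \<and> f k \<longlonglongrightarrow> c k"
    by (auto dest: choice)
  then have f: "\<And>k n. f k n \<in> S - {c k}" "\<And>k. f k \<longlonglongrightarrow> c k"
    by simp_all
  have "c k islimpt range (f k)" for k
    unfolding islimpt_sequential using f by (intro exI[of _ "f k"]) auto
  then have "infinite (range (f k))" for k
    using islimpt_finite by blast
  moreover have "finite (range (f k) \<inter> range (f j))" if "j < k" for j k
    using f(2) f(2) assms(1) that by (intro finite_range_Int_if_tendsto_distinct) (auto simp: inj_eq)
  ultimately have D_infinite: "infinite (disjointed (\<lambda>k. range (f k)) k)" for k
    by (rule infinite_disjointed)
  define D where "D = disjointed (\<lambda>k. range (f k))"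
  have D_sub: "D k \<subseteq> range (f k)" for k
    unfolding D_def by (rule disjointed_subset)
  have bij: "bij_betw (from_nat_into (D k)) UNIV (D k)" for k
    using D_infinite countable_subset[OF D_sub countable_image]
    by (intro bij_betw_from_nat_into) (auto simp: D_def)
  define d where "d k = from_nat_into (D k)" for k
  have d_inj: "inj (d k)" and d_range: "range (d k) = D k" for k
    using bij[of k] unfolding d_def bij_betw_def by simp_all
  show ?thesis
  proof
    show "inj (case_prod d)"
      by (rule inj_case_prod_if_disjoint_family[OF d_inj])
        (simp add: d_range D_def disjoint_family_disjointed)
    have "d k n \<in> S" for k n
    proof -
      have "d k n \<in> range (f k)"
        using d_range D_sub by blast
      then show ?thesis
        using f(1) by auto
    qed
    then show "range (case_prod d) \<subseteq> S"
      by (simp add: image_subset_iff split_paired_all)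
    show "d k \<longlonglongrightarrow> c k" for k
      using d_inj _ finite_far_from_limit[OF f(2)]
      by (rule tendsto_if_inj_into_concentrated) (use d_range D_sub in simp_all)
  qed
qed

text \<open>Row \<open>m\<close> of \<open>distribute d\<close> runs, for every \<open>k\<close>, through the terms of \<open>d k\<close> whose
  index lies in the \<open>m\<close>-th column of the Cantor pairing, so every row meets every \<open>d k\<close>
  infinitely often.\<close>
definition distribute :: "(nat \<Rightarrow> nat \<Rightarrow> 'a) \<Rightarrow> nat \<times> nat \<Rightarrow> 'a" where
  "distribute d = (\<lambda>(m, n). case prod_decode n of (k, j) \<Rightarrow> d k (prod_encode (m, j)))"

lemma distribute_encode: "distribute d (m, prod_encode (k, j)) = d k (prod_encode (m, j))"
  by (simp add: distribute_def)

lemma range_distribute: "range (distribute d) \<subseteq> range (case_prod d)"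
proof
  fix z assume "z \<in> range (distribute d)"
  then obtain m n where "z = distribute d (m, n)"
    by (metis rangeE surj_pair)
  moreover obtain k j where "prod_decode n = (k, j)"
    by (metis surj_pair)
  ultimately have "z = case_prod d (k, prod_encode (m, j))"
    by (simp add: distribute_def)
  then show "z \<in> range (case_prod d)"
    by blast
qed

lemma inj_distribute:
  assumes "inj (case_prod d)"
  shows "inj (distribute d)"
proof (rule injI, clarify)
  fix m n m' n' assume eq: "distribute d (m, n) = distribute d (m', n')"
  obtain k j k' j' where kj: "prod_decode n = (k, j)" "prod_decode n' = (k', j')"
    by (metis surj_pair)
  have "(k, prod_encode (m, j)) = (k', prod_encode (m', j'))"
    by (rule injD[OF assms]) (use eq kj in \<open>simp add: distribute_def\<close>)
  then have "k = k'" "m = m'" "j = j'"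
    by simp_all
  then show "m = m' \<and> n = n'"
    using kj by (metis prod_decode_eq)
qed

lemma limpt_of_distribute_tail:
  assumes "inj (case_prod d)" "d k \<longlonglongrightarrow> c"
  shows "c islimpt distribute d ` tail n"
proof -
  define T where "T = range (\<lambda>j. d k (prod_encode (Suc n, j)))"
  have "inj (\<lambda>j. d k (prod_encode (Suc n, j)))"
  proof (rule injI)
    fix j j' assume "d k (prod_encode (Suc n, j)) = d k (prod_encode (Suc n, j'))"
    then have "(k, prod_encode (Suc n, j)) = (k, prod_encode (Suc n, j'))"
      by (intro injD[OF assms(1)]) simp
    then show "j = j'"
      by simp
  qed
  then have "c islimpt T"
    using assms(2) unfolding T_def
    by (intro islimpt_if_infinite_subset_range) (auto dest: finite_imageD)
  moreover have "T \<subseteq> distribute d ` tail n"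
  proof
    fix z assume "z \<in> T"
    then obtain j where "z = distribute d (Suc n, prod_encode (k, j))"
      unfolding T_def distribute_encode by blast
    then show "z \<in> distribute d ` tail n"
      by (auto simp: tail_def)
  qed
  ultimately show ?thesis
    by (rule islimpt_subset)
qed

lemma distribute_in_Xset:
  assumes inj: "inj (case_prod d)" and QI: "range (case_prod d) \<subseteq> QI"
    and "inj c" and lim: "\<And>k. d k \<longlonglongrightarrow> c k"
  shows "distribute d \<in> Xset"
proof -
  have limpt: "c k islimpt distribute d ` tail n" for k n
    using inj lim by (rule limpt_of_distribute_tail)
  have not_conv: "distribute d ` tail n \<notin> conv" for n
  proof
    assume "distribute d ` tail n \<in> conv"
    then have "finite {a. a islimpt distribute d ` tail n}"
      by (rule finite_limpts_if_conv)
    moreover have "range c \<subseteq> {a. a islimpt distribute d ` tail n}"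
      using limpt by blast
    ultimately show False
      using \<open>inj c\<close> finite_subset finite_imageD by (metis infinite_UNIV_nat)
  qed
  have spread: "\<not> distribute d ` tail n \<subseteq> ball p (dist (c 0) (c 1) / 3)" for p n
  proof
    assume "distribute d ` tail n \<subseteq> ball p (dist (c 0) (c 1) / 3)"
    then have "dist (c 0) (c 1) \<le> 2 * (dist (c 0) (c 1) / 3)"
      by (rule limpts_dist_le_if_subset_ball[OF limpt limpt])
    moreover have "c 0 \<noteq> c 1"
      using \<open>inj c\<close> by (auto dest: injD)
    ultimately show False
      by simp
  qed
  have "dist (c 0) (c 1) > 0"
    using \<open>inj c\<close> by (auto dest: injD)
  then have "\<exists>U. open U \<and> p \<in> U \<and> (\<forall>n. \<not> distribute d ` tail n \<subseteq> U)" for p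
    using spread by (intro exI[of _ "ball p (dist (c 0) (c 1) / 3)"]) auto
  moreover have "range (distribute d) \<subseteq> QI"
    using range_distribute QI by (rule order_trans)
  ultimately show ?thesis
    unfolding Xset_def using inj_distribute[OF inj] not_conv by blast
qed

lemma exists_Xset_subset:
  assumes "S \<subseteq> QI" "S \<notin> conv"
  shows "\<exists>y\<in>Xset. range y \<subseteq> S"
proof -
  have "infinite {c. c islimpt S}"
    using assms conv_iff_finite_limpts by blast
  then obtain c :: "nat \<Rightarrow> real" where c: "inj c" "range c \<subseteq> {c. c islimpt S}"
    unfolding infinite_iff_countable_subset by blast
  then obtain d where "inj (case_prod d)" "range (case_prod d) \<subseteq> S" "\<And>k. d k \<longlonglongrightarrow> c k"
    using obtain_disjoint_sequences_to_limpts[of c S] by blast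
  then show ?thesis
    using c(1) assms(1) range_distribute[of d]
    by (intro bexI[of _ "distribute d"] distribute_in_Xset) auto
qed

section \<open>The function \<open>rho01\<close>\<close>

lemma almost_disjoint_family_index_eq:
  assumes "almost_disjoint_family A" "finite K" "A i - K \<subseteq> A j - K'"
  shows "i = j"
proof (rule ccontr)
  assume "i \<noteq> j"
  then have "finite (A i \<inter> A j)"
    using assms(1) unfolding almost_disjoint_family_def by blast
  moreover have "A i \<subseteq> (A i \<inter> A j) \<union> K"
    using assms(3) by blast
  ultimately have "finite (A i)"
    using assms(2) finite_subset by blast
  then show False
    using assms(1) unfolding almost_disjoint_family_def by blast
qed

text \<open>\<open>rho01\<close> is well defined: by almost disjointness a representation \<open>A j - K'\<close> of
  \<open>A i - K\<close> has \<open>j = i\<close>, and then \<open>A i \<inter> K' = A i \<inter> K\<close>.\<close>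
lemma rho01_Diff:
  assumes "almost_disjoint_family A" "finite K"
  shows "rho01 A x (A i - K) = x i ` tail (max0 (A i \<inter> K))"
proof -
  define p where "p = (SOME (j, K'). finite K' \<and> A i - K = A j - K')"
  have "(\<lambda>(j, K'). finite K' \<and> A i - K = A j - K') p"
    unfolding p_def
    by (rule someI[of "\<lambda>(j, K'). finite K' \<and> A i - K = A j - K'" "(i, K)"]) (simp add: assms(2))
  moreover obtain j K' where p: "p = (j, K')"
    by (metis surj_pair)
  ultimately have "A i - K = A j - K'"
    by simp
  moreover from this have "i = j"
    using almost_disjoint_family_index_eq[OF assms] by blast
  ultimately have "A j \<inter> K' = A i \<inter> K"
    by blast
  then show ?thesis
    unfolding rho01_def p_def[symmetric] p using \<open>i = j\<close> by simp
qed

lemma max0_mono: "K \<subseteq> K' \<Longrightarrow> finite K' \<Longrightarrow> max0 K \<le> max0 K'"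
  unfolding max0_def by (auto intro: Max_mono)

lemma tail_antimono: "n \<le> n' \<Longrightarrow> tail n' \<subseteq> tail n"
  unfolding tail_def by auto

lemma infinite_tail: "infinite (tail n)"
  unfolding tail_def by (simp add: finite_cartesian_product_iff infinite_Ioi gt_ex)

locale rho01_setting =
  fixes A :: "'i \<Rightarrow> nat set" and x :: "'i \<Rightarrow> nat \<times> nat \<Rightarrow> real"
  assumes almost_disjoint: "almost_disjoint_family A"
    and x_bij: "bij_betw x UNIV Xset"
begin

lemma x_in_Xset: "x i \<in> Xset"
  using x_bij by (auto simp: bij_betw_def)

lemma inj_x: "inj (x i)"
  using x_in_Xset unfolding Xset_def by blast

lemma Abar_cases:
  assumes "F \<in> Abar A"
  obtains i K where "finite K" "F = A i - K"
  using assms unfolding Abar_def by blast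

lemma Diff_in_Abar: "finite K \<Longrightarrow> A i - K \<in> Abar A"
  unfolding Abar_def by blast

lemma rho01_image_tail:
  assumes "F \<in> Abar A"
  obtains i n where "rho01 A x F = x i ` tail n"
proof -
  obtain i K where "finite K" "F = A i - K"
    using assms by (rule Abar_cases)
  then have "rho01 A x F = x i ` tail (max0 (A i \<inter> K))"
    using rho01_Diff[OF almost_disjoint] by simp
  then show ?thesis
    by (rule that)
qed

lemma rho01_subset_QI: "F \<in> Abar A \<Longrightarrow> rho01 A x F \<subseteq> QI"
proof (elim rho01_image_tail)
  fix i n assume "rho01 A x F = x i ` tail n"
  moreover have "range (x i) \<subseteq> QI"
    using x_in_Xset unfolding Xset_def by blast
  ultimately show "rho01 A x F \<subseteq> QI"
    by auto
qed

lemma infinite_rho01: "F \<in> Abar A \<Longrightarrow> infinite (rho01 A x F)"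
proof (elim rho01_image_tail)
  fix i n assume "rho01 A x F = x i ` tail n"
  moreover have "inj_on (x i) (tail n)"
    using inj_x by (rule inj_on_subset) simp
  ultimately show "infinite (rho01 A x F)"
    using infinite_tail finite_imageD by metis
qed

lemma rho01_not_conv: "F \<in> Abar A \<Longrightarrow> rho01 A x F \<notin> conv"
proof (elim rho01_image_tail)
  fix i n assume "rho01 A x F = x i ` tail n"
  moreover have "x i ` tail n \<notin> conv"
    using x_in_Xset unfolding Xset_def by blast
  ultimately show "rho01 A x F \<notin> conv"
    by simp
qed

lemma rho01_mono:
  assumes "E \<in> Abar A" "F \<in> Abar A" "E \<subseteq> F"
  shows "rho01 A x E \<subseteq> rho01 A x F"
proof -
  obtain i K where E: "finite K" "E = A i - K"
    using assms(1) by (rule Abar_cases)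
  obtain j K' where F: "finite K'" "F = A j - K'"
    using assms(2) by (rule Abar_cases)
  have "i = j"
    using assms(3) unfolding E(2) F(2) by (rule almost_disjoint_family_index_eq[OF almost_disjoint E(1)])
  then have "A i \<inter> K' \<subseteq> A i \<inter> K"
    using assms(3) unfolding E(2) F(2) by blast
  then have "max0 (A i \<inter> K') \<le> max0 (A i \<inter> K)"
    by (rule max0_mono) (simp add: E(1))
  then show ?thesis
    unfolding E(2) F(2) rho01_Diff[OF almost_disjoint E(1)] rho01_Diff[OF almost_disjoint F(1)]
      \<open>i = j\<close>[symmetric]
    by (intro image_mono tail_antimono)
qed

text \<open>Removing from \<open>A i\<close> an element \<open>j \<ge> m\<close> cuts the rows \<open>\<le> j\<close>, in particular the
  row of \<open>a = x i (m, k)\<close>, out of the image.\<close>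
lemma rho01_Diff_excludes:
  assumes "F \<in> Abar A" "a \<in> rho01 A x F"
  shows "\<exists>K. finite K \<and> a \<notin> rho01 A x (F - K)"
proof -
  obtain i K where F: "finite K" "F = A i - K"
    using assms(1) by (rule Abar_cases)
  obtain m k where a: "a = x i (m, k)"
    using assms(2) unfolding F(2) rho01_Diff[OF almost_disjoint F(1)] by auto
  have "infinite (A i)"
    using almost_disjoint unfolding almost_disjoint_family_def by blast
  then obtain j where j: "m \<le> j" "j \<in> A i"
    unfolding infinite_nat_iff_unbounded_le by blast
  define K' where "K' = K \<union> {j}"
  have K': "finite K'" "F - {j} = A i - K'"
    unfolding K'_def using F by auto
  have "A i \<inter> K' \<noteq> {}"
    unfolding K'_def using j(2) by blast
  moreover have "j \<le> Max (A i \<inter> K')"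
    by (rule Max_ge) (use K'(1) j(2) in \<open>auto simp: K'_def\<close>)
  ultimately have "j \<le> max0 (A i \<inter> K')"
    by (simp add: max0_def)
  then have "(m, k) \<notin> tail (max0 (A i \<inter> K'))"
    using j(1) unfolding tail_def by simp
  then have "a \<notin> rho01 A x (F - {j})"
    unfolding a K'(2) rho01_Diff[OF almost_disjoint K'(1)] by (simp add: inj_image_mem_iff[OF inj_x])
  then show ?thesis
    by blast
qed

lemma rho01_subset_if_not_conv:
  assumes "B \<subseteq> QI" "B \<notin> conv"
  shows "\<exists>E\<in>Abar A. rho01 A x E \<subseteq> B"
proof -
  obtain y where y: "y \<in> Xset" "range y \<subseteq> B"
    using exists_Xset_subset[OF assms] by blast
  then have "y \<in> range x"
    using x_bij by (simp add: bij_betw_def)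
  then obtain i where "y = x i"
    by blast
  have "rho01 A x (A i - {}) = x i ` tail 0"
    using rho01_Diff[OF almost_disjoint finite.emptyI] by (simp add: max0_def)
  then have "rho01 A x (A i - {}) \<subseteq> B"
    using y(2) \<open>y = x i\<close> by auto
  then show ?thesis
    using Diff_in_Abar[OF finite.emptyI] by blast
qed

lemma partition_regular_rho01: "partition_regular QI (UNIV :: nat set) (Abar A) (rho01 A x)"
  unfolding partition_regular_def
proof (intro conjI ballI allI impI)
  show "countable QI" "infinite QI"
    by (rule countable_QI, rule infinite_QI)
  show "countable (UNIV :: nat set)" "infinite (UNIV :: nat set)"
    by simp_all
  show "Abar A \<noteq> {}"
    using Diff_in_Abar[OF finite.emptyI] by blast
  show "F \<subseteq> UNIV" for F :: "nat set"
    by simp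
  show "infinite F" if F: "F \<in> Abar A" for F
  proof -
    obtain i K where "finite K" "F = A i - K"
      using F by (rule Abar_cases)
    moreover have "infinite (A i)"
      using almost_disjoint unfolding almost_disjoint_family_def by blast
    ultimately show ?thesis
      by simp
  qed
  show "F - K \<in> Abar A" if F: "F \<in> Abar A" and K: "finite K" for F K
  proof -
    obtain i K0 where "finite K0" "F = A i - K0"
      using F by (rule Abar_cases)
    then have "F - K = A i - (K0 \<union> K)" "finite (K0 \<union> K)"
      using K by auto
    then show ?thesis
      using Diff_in_Abar by simp
  qed
  show "rho01 A x F \<subseteq> QI" "infinite (rho01 A x F)" if "F \<in> Abar A" for F
    using that by (rule rho01_subset_QI, rule infinite_rho01)
  show "rho01 A x E \<subseteq> rho01 A x F" if "E \<in> Abar A" "F \<in> Abar A" "E \<subseteq> F" for E F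
    using that by (rule rho01_mono)
  show "\<exists>E\<in>Abar A. rho01 A x E \<subseteq> B \<or> rho01 A x E \<subseteq> C"
    if "F \<in> Abar A" "rho01 A x F = B \<union> C" for F B C
  proof -
    have "B \<union> C \<notin> conv" "B \<union> C \<subseteq> QI"
      using rho01_not_conv[OF that(1)] rho01_subset_QI[OF that(1)] unfolding that(2) by simp_all
    then have "B \<notin> conv \<and> B \<subseteq> QI \<or> C \<notin> conv \<and> C \<subseteq> QI"
      using conv_Un by blast
    then show ?thesis
      using rho01_subset_if_not_conv by blast
  qed
  show "\<exists>F\<in>Abar A. F \<subseteq> E \<and> (\<forall>a\<in>rho01 A x F. \<exists>K. finite K \<and> K \<subseteq> UNIV \<and> a \<notin> rho01 A x (F - K))"
    if E: "E \<in> Abar A" for E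
    using E by (intro bexI[of _ E]) (simp add: rho01_Diff_excludes[OF E])
qed

lemma ideal_of_rho01: "ideal_of QI (Abar A) (rho01 A x) = conv"
proof
  show "ideal_of QI (Abar A) (rho01 A x) \<subseteq> conv"
  proof
    fix B assume "B \<in> ideal_of QI (Abar A) (rho01 A x)"
    then have "B \<subseteq> QI" "\<forall>F\<in>Abar A. \<not> rho01 A x F \<subseteq> B"
      unfolding ideal_of_def by auto
    then show "B \<in> conv"
      using rho01_subset_if_not_conv by blast
  qed
  show "conv \<subseteq> ideal_of QI (Abar A) (rho01 A x)"
  proof
    fix B assume B: "B \<in> conv"
    then have "\<not> rho01 A x F \<subseteq> B" if "F \<in> Abar A" for F
      using conv_subset rho01_not_conv[OF that] by blast
    then show "B \<in> ideal_of QI (Abar A) (rho01 A x)"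
      unfolding ideal_of_def using conv_subset_QI[OF B] by blast
  qed
qed

end

theorem proposition6p4:
  fixes A :: "real \<Rightarrow> nat set" and x :: "real \<Rightarrow> nat \<times> nat \<Rightarrow> real"
  assumes "almost_disjoint_family A"
    and "bij_betw x UNIV Xset"
  shows "partition_regular QI (UNIV :: nat set) (Abar A) (rho01 A x) \<and>
         ideal_of QI (Abar A) (rho01 A x) = conv"
proof -
  interpret rho01_setting A x
    using assms by unfold_locales
  show ?thesis
    using partition_regular_rho01 ideal_of_rho01 by blast
qed

end
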